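(* Under the standing setup, for all $t\ge0$ and $u_0\in\mathbb R^d$, $\mathscr S(t)u_0=\sup_{n\in\mathbb N}\mathcal E_{t/n}^{\,n}u_0=\lim_{n\to\infty}\mathcal E_{2^{-n}t}^{\,2^n}u_0,$ where $\mathcal E_h^{\,k}$ denotes the $k$-fold composition of $\mathcal E_h$.
   Context: Standing setup: $d\in\mathbb N$; vectors in $\mathbb R^d$; inequalities and suprema of vectors are componentwise; reals are identified with constant vectors. A $Q$-matrix is $q\in\mathbb R^{d\times d}$ with $q_{ii}\le0$, $q_{ij}\ge0$ ($i\ne j$), $\sum_jq_{ij}=0$. Let $\mathcal P$ be a set of $Q$-matrices and $f=(f_q)_{q\in\mathcal P}\subset\mathbb R^d$ with $\sup_{q\in\mathcal P}f_q=f_{q_0}=0$ for some $q_0\in\mathcal P$, such that $\mathcal Qu:=\sup_{q\in\mathcal P}(qu+f_q)$ is finite for every $u\in\mathbb R^d$. For $q\in\mathcal P$, $t\ge0$: $S_q(t)u_0:=e^{tq}u_0+\int_0^te^{sq}f_q\,ds$. For $h\ge0$: $\mathcal E_hu_0:=\sup_{q\in\mathcal P}S_q(h)u_0$. $P$ is the set of finite subsets $\pi\subset[0,\infty)$ with $0\in\pi$; $P_t:=\{\pi\in P:\max\pi=t\}$. For $\pi=\{t_0,\dots,t_m\}$ with $0=t_0<\dots<t_m$, $m\ge1$, $\mathcal E_\pi:=\mathcal E_{t_1-t_0}\circ\cdots\circ\mathcal E_{t_m-t_{m-1}}$, and $\mathcal E_{\{0\}}:=\mathcal E_0$. The Nisio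 semigroup of $(\mathcal P,f)$ is $\mathscr S(t)u_0:=\sup_{\pi\in P_t}\mathcal E_\pi u_0$. *)

theory Defs
  imports "HOL-Analysis.Analysis"
begin

text \<open>Vectors in R^d are \<open>real^'n\<close>, d = CARD('n); matrices are \<open>real^'n^'n\<close>.\<close>

definition Q_matrix :: "real^'n^'n \<Rightarrow> bool" where
  "Q_matrix q \<longleftrightarrow> (\<forall>i. q$i$i \<le> 0) \<and> (\<forall>i j. i \<noteq> j \<longrightarrow> q$i$j \<ge> 0) \<and> (\<forall>i. (\<Sum>j\<in>UNIV. q$i$j) = 0)"

fun matpow :: "real^'n^'n \<Rightarrow> nat \<Rightarrow> real^'n^'n" where
  "matpow A 0 = mat 1"
| "matpow A (Suc k) = A ** matpow A k"

definition mexp :: "real^'n^'n \<Rightarrow> real^'n^'n" where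
  "mexp A = (\<Sum>k. (1 / (fact k :: real)) *\<^sub>R matpow A k)"

definition vsup :: "(real^'n) set \<Rightarrow> real^'n" where
  "vsup A = (\<chi> i. Sup ((\<lambda>x. x$i) ` A))"

definition Sq :: "real^'n^'n \<Rightarrow> real^'n \<Rightarrow> real \<Rightarrow> real^'n \<Rightarrow> real^'n" where
  "Sq q fq t u0 = mexp (t *\<^sub>R q) *v u0 + integral {0..t} (\<lambda>s. mexp (s *\<^sub>R q) *v fq)"

definition Eh :: "(real^'n^'n) set \<Rightarrow> (real^'n^'n \<Rightarrow> real^'n) \<Rightarrow> real \<Rightarrow> real^'n \<Rightarrow> real^'n" where
  "Eh P f h u0 = vsup ((\<lambda>q. Sq q (f q) h u0) ` P)"

definition partitions_upto :: "real \<Rightarrow> real set set" where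
  "partitions_upto t = {\<pi>. finite \<pi> \<and> \<pi> \<subseteq> {0..} \<and> 0 \<in> \<pi> \<and> Max \<pi> = t}"

text \<open>For \<open>\<pi> = {t0<...<tm}\<close>, \<open>E_\<pi> = E_{t1-t0} \<circ> ... \<circ> E_{tm-t(m-1)}\<close>; \<open>E_{0} = E_0\<close>.\<close>
definition Epi :: "(real^'n^'n) set \<Rightarrow> (real^'n^'n \<Rightarrow> real^'n) \<Rightarrow> real set \<Rightarrow> real^'n \<Rightarrow> real^'n" where
  "Epi P f \<pi> u0 =
     (let ts = sorted_list_of_set \<pi>;
          hs = map2 (\<lambda>a b. b - a) ts (tl ts)
      in if hs = [] then Eh P f 0 u0 else foldr (Eh P f) hs u0)"

definition Nisio :: "(real^'n^'n) set \<Rightarrow> (real^'n^'n \<Rightarrow> real^'n) \<Rightarrow> real \<Rightarrow> real^'n \<Rightarrow> real^'n" where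
  "Nisio P f t u0 = vsup ((\<lambda>\<pi>. Epi P f \<pi> u0) ` partitions_upto t)"

end

theory Submission
  imports Defs
begin

text \<open>
  Each \<open>S\<^sub>q(h)\<close> is a positive affine map preserving constants, and \<open>S\<^sub>q\<close> is a
  semigroup. Hence every \<open>E\<^sub>h\<close> is monotone, commutes with adding constants and
  satisfies \<open>E\<^sub>a\<^sub>+\<^sub>b \<le> E\<^sub>a \<circ> E\<^sub>b\<close>.
  Given a partition \<open>\<pi>\<close> of \<open>[0, t]\<close> and \<open>\<delta> = t/n\<close>, round every step of \<open>\<pi>\<close>
  down to a multiple of \<open>\<delta>\<close>: on a box preserved by all \<open>E\<^sub>h\<close> this costs at most
  \<open>\<delta> B\<close> per step, where \<open>B\<close> bounds \<open>q u + f\<^sub>q\<close> on the box. The missing uniform steps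
  are then added back, using \<open>E\<^sub>\<delta> \<ge> S\<^sub>q\<^sub>0(\<delta>) \<ge> id - \<delta> B\<close>.
  Thus \<open>E\<^sub>\<pi> u\<^sub>0 \<le> E\<^sub>t\<^sub>/\<^sub>n\<^sup>n u\<^sub>0 + C\<^sub>\<pi>/n\<close>, and since \<open>E\<^sub>t\<^sub>/\<^sub>n\<^sup>n u\<^sub>0\<close> is itself of the
  form \<open>E\<^sub>\<pi> u\<^sub>0\<close>, it converges to their supremum, the Nisio semigroup at \<open>u\<^sub>0\<close>.
\<close>

section \<open>Square matrices as a Banach algebra\<close>

text \<open>\<open>real^'n^'n\<close> already carries the componentwise product, so the matrix algebra with the
  operator norm lives on a type copy; \<open>mexp\<close> is then its exponential.\<close>
typedef ('n::finite) sqmat = "UNIV :: (real^'n^'n) set"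
  morphisms mat_of sqmat by simp

setup_lifting type_definition_sqmat

instantiation sqmat :: (finite) real_normed_algebra_1
begin
lift_definition zero_sqmat :: "'a sqmat" is "0" .
lift_definition one_sqmat :: "'a sqmat" is "mat 1" .
lift_definition plus_sqmat :: "'a sqmat \<Rightarrow> 'a sqmat \<Rightarrow> 'a sqmat" is "(+)" .
lift_definition minus_sqmat :: "'a sqmat \<Rightarrow> 'a sqmat \<Rightarrow> 'a sqmat" is "(-)" .
lift_definition uminus_sqmat :: "'a sqmat \<Rightarrow> 'a sqmat" is "uminus" .
lift_definition times_sqmat :: "'a sqmat \<Rightarrow> 'a sqmat \<Rightarrow> 'a sqmat" is "(**)" .
lift_definition scaleR_sqmat :: "real \<Rightarrow> 'a sqmat \<Rightarrow> 'a sqmat" is "scaleR" .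
lift_definition norm_sqmat :: "'a sqmat \<Rightarrow> real" is "\<lambda>A. onorm ((*v) A)" .
definition dist_sqmat :: "'a sqmat \<Rightarrow> 'a sqmat \<Rightarrow> real" where "dist_sqmat a b = norm (a - b)"
definition sgn_sqmat :: "'a sqmat \<Rightarrow> 'a sqmat" where "sgn_sqmat x = scaleR (inverse (norm x)) x"
definition uniformity_sqmat :: "('a sqmat \<times> 'a sqmat) filter" where
  "uniformity_sqmat = (INF e\<in>{0 <..}. principal {(x, y). dist x y < e})"
definition open_sqmat :: "'a sqmat set \<Rightarrow> bool"
  where "open_sqmat S = (\<forall>x\<in>S. \<forall>\<^sub>F (x', y) in uniformity. x' = x \<longrightarrow> y \<in> S)"

instance
proof
  fix a b c :: "'a sqmat" and r s :: real
  show "a * b * c = a * (b * c)" by transfer (simp add: matrix_mul_assoc)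
  show "(a + b) * c = a * c + b * c"
    by transfer (simp add: matrix_matrix_mult_def vec_eq_iff distrib_right sum.distrib)
  show "a * (b + c) = a * b + a * c" by transfer (simp add: matrix_add_ldistrib)
  show "1 * a = a" "a * 1 = a" by (transfer, simp)+
  show "(0::'a sqmat) \<noteq> 1" by transfer (simp add: mat_def vec_eq_iff)
  show "a + b + c = a + (b + c)" "a + b = b + a" "0 + a = a" "- a + a = 0" "a - b = a + - b"
    by (transfer, simp)+
  show "r *\<^sub>R (a + b) = r *\<^sub>R a + r *\<^sub>R b" "(r + s) *\<^sub>R a = r *\<^sub>R a + s *\<^sub>R a"
    "r *\<^sub>R s *\<^sub>R a = (r * s) *\<^sub>R a" "1 *\<^sub>R a = a"
    by (transfer, simp add: scaleR_add_right scaleR_add_left)+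
  show "r *\<^sub>R a * b = r *\<^sub>R (a * b)"
    by transfer (simp add: matrix_matrix_mult_def vec_eq_iff sum_distrib_left mult.assoc)
  show "a * r *\<^sub>R b = r *\<^sub>R (a * b)"
    by transfer (simp add: matrix_matrix_mult_def vec_eq_iff sum_distrib_left mult.left_commute)
  show "dist a b = norm (a - b)" by (simp add: dist_sqmat_def)
  show "sgn a = inverse (norm a) *\<^sub>R a" by (simp add: sgn_sqmat_def)
  show "(uniformity :: ('a sqmat \<times> 'a sqmat) filter) =
      (INF e\<in>{0 <..}. principal {(x, y). dist x y < e})"
    by (simp add: uniformity_sqmat_def)
  show "open U = (\<forall>x\<in>U. \<forall>\<^sub>F (x', y) in uniformity. x' = x \<longrightarrow> y \<in> U)" for U :: "'a sqmat set"
    by (simp add: open_sqmat_def)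
  show "(norm a = 0) = (a = 0)"
    by transfer (simp add: onorm_eq_0[OF matrix_vector_mul_bounded_linear] matrix_eq[where B=0])
  show "norm (a + b) \<le> norm a + norm b"
  proof transfer
    fix a b :: "real^'a^'a"
    have "(*v) (a + b) = (\<lambda>x. a *v x + b *v x)"
      by (rule ext) (simp add: matrix_vector_mult_add_rdistrib)
    then show "onorm ((*v) (a + b)) \<le> onorm ((*v) a) + onorm ((*v) b)"
      by (simp add: onorm_triangle matrix_vector_mul_bounded_linear)
  qed
  show "norm (r *\<^sub>R a) = \<bar>r\<bar> * norm a"
  proof transfer
    fix r and a :: "real^'a^'a"
    have "(*v) (r *\<^sub>R a) = (\<lambda>x. r *\<^sub>R (a *v x))"
      by (simp add: matrix_vector_mult_def vec_eq_iff sum_distrib_left mult.assoc fun_eq_iff)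
    then show "onorm ((*v) (r *\<^sub>R a)) = \<bar>r\<bar> * onorm ((*v) a)"
      by (simp add: onorm_scaleR[OF matrix_vector_mul_bounded_linear])
  qed
  show "norm (a * b) \<le> norm a * norm b"
  proof transfer
    fix a b :: "real^'a^'a"
    have "(*v) (a ** b) = (*v) a \<circ> (*v) b" by (simp add: matrix_vector_mul_assoc fun_eq_iff)
    then show "onorm ((*v) (a ** b)) \<le> onorm ((*v) a) * onorm ((*v) b)"
      by (simp add: onorm_compose matrix_vector_mul_bounded_linear)
  qed
  have "(*v) (mat 1 :: real^'a^'a) = (\<lambda>x. x)" by (simp add: fun_eq_iff)
  then show "norm (1::'a sqmat) = 1" by transfer (simp add: onorm_id)
qed

end

lemma mat_of_sqmat_ops [simp]:
  "mat_of 0 = 0" "mat_of 1 = mat 1" "mat_of (x + y) = mat_of x + mat_of y"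
  "mat_of (x - y) = mat_of x - mat_of y" "mat_of (r *\<^sub>R x) = r *\<^sub>R mat_of x"
  "mat_of (x * y) = mat_of x ** mat_of y" "mat_of (sqmat A) = A"
  by (transfer, simp)+

lemma mat_of_power [simp]: "mat_of (x ^ k) = matpow (mat_of x) k"
  by (induction k) simp_all

lemma mat_of_of_real [simp]: "mat_of (of_real r) = r *\<^sub>R mat 1"
  by (simp add: of_real_def)

lemma norm_sqmat_eq_onorm: "norm x = onorm ((*v) (mat_of x))"
  by transfer simp

lemma norm_matrix_le_onorm: "norm (A::real^'n^'n) \<le> real CARD('n) * real CARD('n) * onorm ((*v) A)"
proof -
  have "norm A \<le> (\<Sum>i\<in>UNIV. norm (A$i))"
    unfolding norm_vec_def by (rule L2_set_le_sum) simp
  also have "\<dots> \<le> (\<Sum>i\<in>(UNIV::'n set). real CARD('n) * onorm ((*v) A))"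
  proof (rule sum_mono)
    fix i
    have "norm (A$i) \<le> (\<Sum>j\<in>UNIV. \<bar>A$i$j\<bar>)" by (rule norm_le_l1_cart)
    also have "\<dots> \<le> (\<Sum>j\<in>(UNIV::'n set). onorm ((*v) A))"
      by (rule sum_mono) (rule matrix_component_le_onorm)
    finally show "norm (A$i) \<le> real CARD('n) * onorm ((*v) A)" by simp
  qed
  finally show ?thesis by (simp add: mult.assoc)
qed

lemma onorm_le_norm_matrix: "onorm ((*v) (A::real^'n^'n)) \<le> real CARD('n) * real CARD('n) * norm A"
proof (rule onorm_le_matrix_component)
  fix k l :: 'n
  have "\<bar>A$k$l\<bar> \<le> norm (A$k)" by (rule component_le_norm_cart)
  also have "\<dots> \<le> norm A" by (rule Finite_Cartesian_Product.norm_nth_le)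
  finally show "\<bar>A$k$l\<bar> \<le> norm A" .
qed

lemma bounded_linear_mat_of: "bounded_linear (mat_of :: 'n::finite sqmat \<Rightarrow> _)"
  by (rule bounded_linear_intro[where K="real CARD('n) * real CARD('n)"])
    (simp_all add: norm_sqmat_eq_onorm norm_matrix_le_onorm mult.commute[of "onorm _"])

lemma bounded_linear_sqmat: "bounded_linear (sqmat :: _ \<Rightarrow> 'n::finite sqmat)"
proof (rule bounded_linear_intro[where K="real CARD('n) * real CARD('n)"])
  fix A B :: "real^'n^'n" and r
  show "sqmat (A + B) = sqmat A + sqmat B" "sqmat (r *\<^sub>R A) = r *\<^sub>R sqmat A"
    by (simp_all flip: mat_of_inject)
  show "norm (sqmat A) \<le> norm A * (real CARD('n) * real CARD('n))"
    using onorm_le_norm_matrix[of A] by (simp add: norm_sqmat_eq_onorm mult.commute)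
qed

instance sqmat :: (finite) banach
proof
  fix X :: "nat \<Rightarrow> 'a sqmat"
  assume "Cauchy X"
  then have "Cauchy (\<lambda>n. mat_of (X n))" by (rule bounded_linear.Cauchy[OF bounded_linear_mat_of])
  then obtain L where "(\<lambda>n. mat_of (X n)) \<longlonglongrightarrow> L"
    using Cauchy_convergent_iff convergent_def by blast
  then have "(\<lambda>n. sqmat (mat_of (X n))) \<longlonglongrightarrow> sqmat L"
    by (rule bounded_linear.tendsto[OF bounded_linear_sqmat])
  then show "convergent X" by (auto simp: convergent_def mat_of_inverse)
qed

lemma mexp_eq_exp: "mexp A = mat_of (exp (sqmat A))"
proof -
  have "mat_of (exp (sqmat A)) = (\<Sum>k. mat_of (sqmat A ^ k /\<^sub>R fact k))"
    unfolding exp_def by (rule bounded_linear.suminf[OF bounded_linear_mat_of summable_exp_generic])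
  then show ?thesis by (simp add: mexp_def divide_inverse)
qed

lemma sqmat_scaleR: "sqmat (r *\<^sub>R A) = r *\<^sub>R sqmat A"
  by (simp flip: mat_of_inject)

lemma mexp_scaleR_eq_exp: "mexp (s *\<^sub>R q) = mat_of (exp (s *\<^sub>R sqmat q))"
  by (simp add: mexp_eq_exp sqmat_scaleR)

lemma mexp_zero [simp]: "mexp 0 = mat 1"
  using mexp_scaleR_eq_exp[of 0 "mat 1"] by simp

lemma mexp_add_scaleR: "mexp ((a + b) *\<^sub>R q) = mexp (a *\<^sub>R q) ** mexp (b *\<^sub>R q)"
proof -
  have "(a *\<^sub>R sqmat q) * (b *\<^sub>R sqmat q) = (b *\<^sub>R sqmat q) * (a *\<^sub>R sqmat q)"
    by (simp add: mult.commute)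
  then have "exp ((a + b) *\<^sub>R sqmat q) = exp (a *\<^sub>R sqmat q) * exp (b *\<^sub>R sqmat q)"
    by (simp add: scaleR_add_left exp_add_commuting)
  then show ?thesis by (simp add: mexp_scaleR_eq_exp)
qed

lemma bounded_linear_mat_of_mult: "bounded_linear (\<lambda>x::'n::finite sqmat. mat_of x *v w)"
proof (rule bounded_linear_intro[where K="norm w"])
  fix x y :: "'n sqmat" and r :: real
  show "mat_of (x + y) *v w = mat_of x *v w + mat_of y *v w"
    by (simp add: matrix_vector_mult_add_rdistrib)
  show "mat_of (r *\<^sub>R x) *v w = r *\<^sub>R (mat_of x *v w)"
    by (simp add: matrix_vector_mult_def vec_eq_iff sum_distrib_left mult.assoc)
  show "norm (mat_of x *v w) \<le> norm x * norm w"
    unfolding norm_sqmat_eq_onorm by (rule onorm[OF matrix_vector_mul_bounded_linear])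
qed

lemma has_vector_derivative_mexp:
  "((\<lambda>s. mexp (s *\<^sub>R q) *v w) has_vector_derivative mexp (s *\<^sub>R q) *v (q *v w)) (at s within T)"
  using bounded_linear.has_vector_derivative[OF bounded_linear_mat_of_mult
      exp_scaleR_has_vector_derivative_right[where A="sqmat q"]]
  by (simp add: mexp_scaleR_eq_exp matrix_vector_mul_assoc)

lemma continuous_on_mexp: "continuous_on S (\<lambda>s. mexp (s *\<^sub>R q) *v w)"
  unfolding continuous_on_eq_continuous_within
  using has_vector_derivative_continuous[OF has_vector_derivative_mexp] by blast

lemma matpow_nonneg: "(\<And>i j. 0 \<le> A $ i $ j) \<Longrightarrow> 0 \<le> matpow A k $ i $ j"
  by (induction k arbitrary: i j) (simp_all add: mat_def matrix_matrix_mult_def sum_nonneg)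

lemma mexp_nonneg_of_nonneg:
  fixes A :: "real^'n^'n"
  assumes "\<And>i j. 0 \<le> A $ i $ j"
  shows "0 \<le> mexp A $ i $ j"
proof -
  have "bounded_linear (\<lambda>x::'n sqmat. mat_of x $ i $ j)"
    by (intro bounded_linear_compose[OF bounded_linear_vec_nth]
        bounded_linear_compose[OF bounded_linear_vec_nth bounded_linear_mat_of])
  note entry = bounded_linear.suminf[OF this summable_exp_generic]
    bounded_linear.summable[OF this summable_exp_generic]
  have "0 \<le> mat_of (sqmat A ^ k /\<^sub>R fact k) $ i $ j" for k
    using matpow_nonneg[of A, OF assms] by simp
  then show ?thesis
    unfolding mexp_eq_exp exp_def entry(1) by (intro suminf_nonneg entry(2))
qed

text \<open>A matrix with nonnegative off-diagonal entries becomes nonnegative after adding a multiple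
  of the identity, and that multiple only contributes a positive scalar factor to the exponential.\<close>
lemma mexp_nonneg:
  assumes offdiag: "\<And>i j. i \<noteq> j \<Longrightarrow> 0 \<le> q $ i $ j" and "0 \<le> s"
  shows "0 \<le> mexp (s *\<^sub>R q) $ i $ j"
proof -
  define c where "c = (\<Sum>k\<in>UNIV. \<bar>q $ k $ k\<bar>)"
  define A where "A = s *\<^sub>R (q + c *\<^sub>R mat 1)"
  have diag: "- q $ k $ k \<le> c" for k
    using member_le_sum[of k UNIV "\<lambda>k. \<bar>q $ k $ k\<bar>"] unfolding c_def by simp
  have A_nonneg: "0 \<le> A $ k $ l" for k l
    using offdiag[of k l] diag[of l] \<open>0 \<le> s\<close> by (cases "k = l") (auto simp: A_def mat_def)
  have split: "s *\<^sub>R sqmat q = sqmat A + of_real (- (s * c))"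
    by (simp add: A_def scaleR_add_right del: of_real_mult flip: mat_of_inject)
  have commute: "sqmat A * of_real (- (s * c)) = of_real (- (s * c)) * sqmat A"
    by (simp add: of_real_def)
  have "exp (s *\<^sub>R sqmat q) = exp (sqmat A) * of_real (exp (- (s * c)))"
    unfolding split exp_add_commuting[OF commute] exp_of_real ..
  then have "mexp (s *\<^sub>R q) = exp (- (s * c)) *\<^sub>R mexp A"
    by (simp add: mexp_scaleR_eq_exp mexp_eq_exp[of A] of_real_def)
  then show ?thesis
    using mexp_nonneg_of_nonneg[OF A_nonneg, of i j] by simp
qed

lemma mexp_mult_one:
  assumes "q *v 1 = 0"
  shows "mexp (s *\<^sub>R q) *v 1 = 1"
proof -
  obtain c where c: "\<And>s. mexp (s *\<^sub>R q) *v 1 = c"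
    using has_vector_derivative_zero_constant[of UNIV "\<lambda>s. mexp (s *\<^sub>R q) *v 1"]
      has_vector_derivative_mexp[of q 1] assms by auto
  then show ?thesis using c[of 0] by simp
qed

section \<open>The solution operators \<open>S\<^sub>q\<close>\<close>

lemma Q_matrix_mult_one: "Q_matrix q \<Longrightarrow> q *v 1 = 0"
  by (simp add: Q_matrix_def matrix_vector_mult_def vec_eq_iff)

lemma nonneg_matrix_mult_mono:
  fixes A :: "real^'n^'m"
  assumes "\<And>i j. 0 \<le> A $ i $ j" and "u \<le> v"
  shows "A *v u \<le> A *v v"
  using assms unfolding less_eq_vec_def
  by (auto simp: matrix_vector_mult_def intro!: sum_mono mult_left_mono)

lemma mexp_mult_mono: "Q_matrix q \<Longrightarrow> 0 \<le> s \<Longrightarrow> u \<le> v \<Longrightarrow> mexp (s *\<^sub>R q) *v u \<le> mexp (s *\<^sub>R q) *v v"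
  by (rule nonneg_matrix_mult_mono, rule mexp_nonneg) (auto simp: Q_matrix_def)

lemma vec_eq_scaleR_one: "vec c = c *\<^sub>R (1::real^'n)"
  by (simp add: vec_eq_iff)

lemma mexp_mult_add_vec:
  "Q_matrix q \<Longrightarrow> mexp (s *\<^sub>R q) *v (u + vec c) = mexp (s *\<^sub>R q) *v u + vec c"
  using mexp_mult_one[OF Q_matrix_mult_one, of q s]
  by (simp add: matrix_vector_right_distrib matrix_vector_mult_scaleR vec_eq_scaleR_one[of c])

lemma mexp_mult_le_vec:
  assumes "Q_matrix q" "0 \<le> s" "w \<le> vec b"
  shows "mexp (s *\<^sub>R q) *v w \<le> vec b"
  using mexp_mult_mono[OF assms] mexp_mult_add_vec[OF assms(1), of s 0 b] by simp

lemma vec_le_mexp_mult: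
  assumes "Q_matrix q" "0 \<le> s" "vec a \<le> w"
  shows "vec a \<le> mexp (s *\<^sub>R q) *v w"
  using mexp_mult_mono[OF assms] mexp_mult_add_vec[OF assms(1), of s 0 a] by simp

lemma integrable_mexp_mult: "(\<lambda>s. mexp (s *\<^sub>R q) *v w) integrable_on {a..b}"
  by (rule integrable_continuous_interval[OF continuous_on_mexp])

lemma integrable_mexp_mult_component: "(\<lambda>s. (mexp (s *\<^sub>R q) *v w) $ i) integrable_on {a..b}"
  using integrable_linear[OF integrable_mexp_mult bounded_linear_vec_nth] by (simp add: o_def)

lemma Sq_zero [simp]: "Sq q fq 0 u = u"
  by (simp add: Sq_def)

lemma Sq_mono: "Q_matrix q \<Longrightarrow> 0 \<le> h \<Longrightarrow> u \<le> v \<Longrightarrow> Sq q fq h u \<le> Sq q fq h v"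
  unfolding Sq_def by (simp add: mexp_mult_mono add_right_mono)

lemma Sq_add_vec:
  assumes "Q_matrix q"
  shows "Sq q fq h (u + vec c) = Sq q fq h u + vec c"
  using mexp_mult_add_vec[OF assms, of h 0 c]
  unfolding Sq_def by (simp add: mexp_mult_add_vec[OF assms] algebra_simps)

lemma integral_mexp_mult_add:
  assumes "0 \<le> a" "0 \<le> b"
  shows "integral {0..a + b} (\<lambda>s. mexp (s *\<^sub>R q) *v w) =
    integral {0..a} (\<lambda>s. mexp (s *\<^sub>R q) *v w)
      + mexp (a *\<^sub>R q) *v integral {0..b} (\<lambda>s. mexp (s *\<^sub>R q) *v w)"
proof -
  let ?g = "\<lambda>s. mexp (s *\<^sub>R q) *v w"
  have "integral {0..a + b} ?g = integral {0..a} ?g + integral {a..a + b} ?g"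
    using Henstock_Kurzweil_Integration.integral_combine[where a=0 and c=a and b="a + b" and f="?g"]
      assms integrable_mexp_mult[of q w 0 "a + b"] by simp
  moreover have "integral {a..a + b} ?g = integral {0..b} (\<lambda>r. mexp (a *\<^sub>R q) *v ?g r)"
    using integral_shift_Icc_real[of 0 b ?g a]
    by (simp add: o_def add.commute[of b a] mexp_add_scaleR matrix_vector_mul_assoc)
  moreover have "integral {0..b} (\<lambda>r. mexp (a *\<^sub>R q) *v ?g r) =
      mexp (a *\<^sub>R q) *v integral {0..b} ?g"
    using integral_linear[OF integrable_mexp_mult matrix_vector_mul_bounded_linear]
    by (simp add: o_def)
  ultimately show ?thesis by simp
qed

lemma Sq_add:
  assumes "0 \<le> a" "0 \<le> b"
  shows "Sq q fq (a + b) u = Sq q fq a (Sq q fq b u)"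
  unfolding Sq_def integral_mexp_mult_add[OF assms] mexp_add_scaleR
  by (simp add: matrix_vector_mul_assoc[symmetric] matrix_vector_right_distrib)

lemma Sq_diff_eq_integral:
  assumes "0 \<le> h"
  shows "Sq q fq h u - u = integral {0..h} (\<lambda>s. mexp (s *\<^sub>R q) *v (q *v u + fq))"
proof -
  have "((\<lambda>s. mexp (s *\<^sub>R q) *v (q *v u))
      has_integral mexp (h *\<^sub>R q) *v u - mexp (0 *\<^sub>R q) *v u) {0..h}"
    by (rule fundamental_theorem_of_calculus[OF assms has_vector_derivative_mexp])
  then have "integral {0..h} (\<lambda>s. mexp (s *\<^sub>R q) *v (q *v u)) = mexp (h *\<^sub>R q) *v u - u"
    by (simp add: integral_unique)
  then show ?thesis
    by (simp add: Sq_def matrix_vector_right_distrib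
        integral_add[OF integrable_mexp_mult integrable_mexp_mult])
qed

lemma Sq_le_add_vec:
  assumes "Q_matrix q" "0 \<le> h" "q *v u + fq \<le> vec b"
  shows "Sq q fq h u \<le> u + vec (h * b)"
proof -
  have "(Sq q fq h u - u) $ i \<le> h * b" for i
  proof -
    have "(Sq q fq h u - u) $ i = integral {0..h} (\<lambda>s. (mexp (s *\<^sub>R q) *v (q *v u + fq)) $ i)"
      by (simp add: Sq_diff_eq_integral[OF assms(2)] integrable_mexp_mult)
    also have "\<dots> \<le> integral {0..h} (\<lambda>s. b)"
      using mexp_mult_le_vec[OF assms(1) _ assms(3)]
      by (intro integral_le) (auto simp: less_eq_vec_def integrable_mexp_mult_component)
    finally show ?thesis using assms(2) by simp
  qed
  then show ?thesis by (simp add: less_eq_vec_def algebra_simps)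
qed

lemma Sq_ge_diff_vec:
  assumes "Q_matrix q" "0 \<le> h" "vec a \<le> q *v u + fq"
  shows "u + vec (h * a) \<le> Sq q fq h u"
proof -
  have "h * a \<le> (Sq q fq h u - u) $ i" for i
  proof -
    have "h * a = integral {0..h} (\<lambda>s. a)" using assms(2) by simp
    also have "\<dots> \<le> integral {0..h} (\<lambda>s. (mexp (s *\<^sub>R q) *v (q *v u + fq)) $ i)"
      using vec_le_mexp_mult[OF assms(1) _ assms(3)]
      by (intro integral_le) (auto simp: less_eq_vec_def integrable_mexp_mult_component)
    also have "\<dots> = (Sq q fq h u - u) $ i"
      by (simp add: Sq_diff_eq_integral[OF assms(2)] integrable_mexp_mult)
    finally show ?thesis .
  qed
  then show ?thesis by (simp add: less_eq_vec_def algebra_simps)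
qed

lemma Sq_le_vec:
  assumes "Q_matrix q" "fq \<le> 0" "0 \<le> h" "u \<le> vec b"
  shows "Sq q fq h u \<le> vec b"
proof -
  have "Sq q fq h u \<le> Sq q fq h (0 + vec b)"
    using Sq_mono[OF assms(1,3)] assms(4) by simp
  also have "\<dots> = Sq q fq h 0 + vec b"
    by (rule Sq_add_vec[OF assms(1)])
  also have "Sq q fq h 0 \<le> 0 + vec (h * 0)"
    using assms(2) by (intro Sq_le_add_vec[OF assms(1,3)]) simp
  finally show ?thesis by simp
qed

section \<open>Partitions and componentwise suprema\<close>

lemma vsup_component: "vsup S $ i = (SUP x\<in>S. x $ i)"
  by (simp add: vsup_def)

lemma vsup_approximated:
  fixes S :: "(real^'n) set" and a :: "nat \<Rightarrow> real^'n"
  assumes bounded: "\<And>x. x \<in> S \<Longrightarrow> x \<le> vec b"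
    and mem: "\<And>n. 1 \<le> n \<Longrightarrow> a n \<in> S"
    and approx: "\<And>x. x \<in> S \<Longrightarrow> \<exists>C. \<forall>n\<ge>1. x \<le> a n + vec (C / real n)"
  shows "a \<longlonglongrightarrow> vsup S" and "vsup S = vsup (a ` {1..})"
proof -
  have bdd: "bdd_above ((\<lambda>x. x $ i) ` S)" for i
    using bounded by (auto simp: bdd_above_def less_eq_vec_def)
  have a_le: "a n $ i \<le> vsup S $ i" if "1 \<le> n" for n i
    unfolding vsup_component by (rule cSUP_upper[OF mem[OF that] bdd])
  have ev_pos: "\<forall>\<^sub>F n in sequentially. 1 \<le> n"
    by (rule eventually_ge_at_top)
  show lim: "a \<longlonglongrightarrow> vsup S"
  proof (rule vec_tendstoI, rule order_tendstoI)
    fix i y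
    assume "vsup S $ i < y"
    then show "\<forall>\<^sub>F n in sequentially. a n $ i < y"
      by (intro eventually_mono[OF ev_pos]) (meson a_le order.strict_trans1)
  next
    fix i y
    assume "y < vsup S $ i"
    moreover have "S \<noteq> {}" using mem[of 1] by auto
    ultimately obtain x where x: "x \<in> S" "y < x $ i"
      unfolding vsup_component by (auto simp: less_cSUP_iff[OF _ bdd])
    then obtain C where C: "\<forall>n\<ge>1. x \<le> a n + vec (C / real n)" using approx by blast
    have "(\<lambda>n. x $ i - C / real n) \<longlonglongrightarrow> x $ i - 0"
      by (intro tendsto_diff tendsto_const lim_const_over_n)
    then have "\<forall>\<^sub>F n in sequentially. y < x $ i - C / real n"
      using x(2) by (simp add: order_tendstoD(1))
    then show "\<forall>\<^sub>F n in sequentially. y < a n $ i"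
      using ev_pos
    proof eventually_elim
      case (elim n)
      then have "x $ i \<le> a n $ i + C / real n" using C by (auto simp: less_eq_vec_def)
      with elim show ?case by linarith
    qed
  qed
  have "vsup S $ i = vsup (a ` {1..}) $ i" for i
  proof (rule antisym)
    have "bdd_above ((\<lambda>n. a n $ i) ` {1..})"
      using a_le by (auto simp: bdd_above_def)
    then have "\<forall>n\<ge>1. a n $ i \<le> vsup (a ` {1..}) $ i"
      by (auto simp: vsup_component image_image intro: cSUP_upper)
    then show "vsup S $ i \<le> vsup (a ` {1..}) $ i"
      using LIMSEQ_le_const2[OF tendsto_vec_nth[OF lim]] by blast
    show "vsup (a ` {1..}) $ i \<le> vsup S $ i"
      using a_le by (auto simp: vsup_component image_image intro: cSUP_least)
  qed
  then show "vsup S = vsup (a ` {1..})" by (simp add: vec_eq_iff)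
qed

definition partition_steps :: "real set \<Rightarrow> real list" where
  "partition_steps \<pi> = (let ts = sorted_list_of_set \<pi> in map2 (\<lambda>a b. b - a) ts (tl ts))"

lemma Epi_eq_foldr:
  assumes "Eh P f 0 u = u"
  shows "Epi P f \<pi> u = foldr (Eh P f) (partition_steps \<pi>) u"
  using assms by (simp add: Epi_def partition_steps_def Let_def)

lemma sum_list_diffs:
  "xs \<noteq> [] \<Longrightarrow> sum_list (map2 (\<lambda>a b. b - a) xs (tl xs)) = last xs - hd (xs::real list)"
  by (induction xs rule: induct_list012) auto

lemma diffs_nonneg: "sorted xs \<Longrightarrow> \<forall>h\<in>set (map2 (\<lambda>a b. b - a) xs (tl xs)). 0 \<le> (h::real)"
  by (induction xs rule: induct_list012) auto

lemma sorted_hd_le_last: "sorted xs \<Longrightarrow> x \<in> set xs \<Longrightarrow> hd xs \<le> x \<and> x \<le> last (xs::real list)"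
  by (induction xs rule: induct_list012) auto

lemma partition_steps_nonneg_sum:
  assumes "\<pi> \<in> partitions_upto t"
  shows "\<forall>h\<in>set (partition_steps \<pi>). 0 \<le> h" and "sum_list (partition_steps \<pi>) = t"
proof -
  have fin: "finite \<pi>" and nonneg: "\<pi> \<subseteq> {0..}" and "0 \<in> \<pi>" and max: "Max \<pi> = t"
    using assms by (auto simp: partitions_upto_def)
  define ts where "ts = sorted_list_of_set \<pi>"
  have ts: "set ts = \<pi>" "sorted ts" "ts \<noteq> []"
    using fin \<open>0 \<in> \<pi>\<close> unfolding ts_def by auto
  have "hd ts \<in> \<pi>" "last ts \<in> \<pi>" "t \<in> \<pi>"
    using ts max fin \<open>0 \<in> \<pi>\<close> by auto
  then have "hd ts = 0" "last ts = t"
    using sorted_hd_le_last[OF ts(2)] ts(1) \<open>0 \<in> \<pi>\<close> nonneg Max_ge[OF fin] max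
    by (force, fastforce)
  then show "sum_list (partition_steps \<pi>) = t"
    using sum_list_diffs[OF ts(3)] by (simp add: partition_steps_def ts_def[symmetric])
  show "\<forall>h\<in>set (partition_steps \<pi>). 0 \<le> h"
    using diffs_nonneg[OF ts(2)] by (simp add: partition_steps_def ts_def[symmetric])
qed

lemma partitions_upto_zero: "partitions_upto 0 = {{0}}"
proof -
  have "\<pi> = {0}" if "\<pi> \<in> partitions_upto 0" for \<pi>
    using that Max_ge[of \<pi>] by (fastforce simp: partitions_upto_def)
  moreover have "{0} \<in> partitions_upto 0" by (simp add: partitions_upto_def)
  ultimately show ?thesis by blast
qed

lemma partition_steps_singleton [simp]: "partition_steps {x} = []"
  by (simp add: partition_steps_def)

lemma sum_list_floor_bounds:
  assumes "0 < \<delta>"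
  shows "\<forall>h\<in>set hs. 0 \<le> h \<Longrightarrow> real (\<Sum>h\<leftarrow>hs. nat \<lfloor>h / \<delta>\<rfloor>) * \<delta> \<le> sum_list hs
    \<and> sum_list hs \<le> (real (\<Sum>h\<leftarrow>hs. nat \<lfloor>h / \<delta>\<rfloor>) + real (length hs)) * \<delta>"
proof (induction hs)
  case (Cons h hs)
  then have "0 \<le> h" by simp
  moreover have "real_of_int \<lfloor>h / \<delta>\<rfloor> * \<delta> \<le> h" "h \<le> (real_of_int \<lfloor>h / \<delta>\<rfloor> + 1) * \<delta>"
    using floor_divide_lower[OF assms, of h] floor_divide_upper[OF assms, of h] by auto
  ultimately show ?case
    using Cons assms by (auto simp: algebra_simps)
qed simp

definition uniform_partition :: "nat \<Rightarrow> real \<Rightarrow> real set" where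
  "uniform_partition n t = (\<lambda>j. real j * t / real n) ` {0..n}"

lemma uniform_partition_in_partitions_upto:
  assumes "1 \<le> n" "0 \<le> t"
  shows "uniform_partition n t \<in> partitions_upto t"
proof -
  have le: "real j * t / real n \<le> t" if "j \<le> n" for j
    using that assms by (simp add: divide_le_eq mult_right_mono mult.commute[of t])
  have "Max (uniform_partition n t) = t"
  proof (rule Max_eqI)
    show "t \<in> uniform_partition n t"
      using assms unfolding uniform_partition_def by (intro image_eqI[of _ _ n]) auto
  qed (use le in \<open>auto simp: uniform_partition_def\<close>)
  moreover have "0 \<in> uniform_partition n t"
    unfolding uniform_partition_def by (intro image_eqI[of _ _ 0]) auto
  ultimately show ?thesis
    using assms by (auto simp: partitions_upto_def uniform_partition_def)
qed

lemma partition_steps_uniform: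
  assumes "1 \<le> n" "0 < t"
  shows "partition_steps (uniform_partition n t) = replicate n (t / real n)"
proof -
  define g where "g j = real j * t / real n" for j :: nat
  have "strict_mono g"
    using assms by (intro strict_monoI) (simp add: g_def divide_strict_right_mono)
  then have "sorted (map g [0..<Suc n])" "distinct (map g [0..<Suc n])"
    by (auto simp: sorted_map strict_mono_less_eq distinct_map strict_mono_imp_inj_on
        simp del: upt_Suc intro: sorted_wrt_mono_rel[OF _ sorted_upt])
  moreover have "set (map g [0..<Suc n]) = uniform_partition n t"
    by (auto simp: uniform_partition_def g_def simp del: upt_Suc)
  ultimately have "sorted_list_of_set (uniform_partition n t) = map g [0..<Suc n]"
    by (metis sorted_list_of_set.idem_if_sorted_distinct)
  moreover have "map2 (\<lambda>a b. b - a) (map g [0..<Suc n]) (tl (map g [0..<Suc n])) =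
      replicate n (t / real n)"
    by (rule nth_equalityI)
      (auto simp: nth_tl g_def diff_divide_distrib[symmetric] algebra_simps simp del: upt_Suc)
  ultimately show ?thesis
    by (simp add: partition_steps_def)
qed

section \<open>The operators \<open>E\<^sub>h\<close>\<close>

lemma mem_box_norm: "u \<in> {vec (- norm u)..vec (norm u)}"
  using component_le_norm_cart[of u] by (auto simp: less_eq_vec_def abs_le_iff minus_le_iff)

definition vec_except :: "'n \<Rightarrow> real \<Rightarrow> real^'n" where
  "vec_except i c = (\<chi> j. if j = i then 0 else c)"

text \<open>Since the rows of a Q-matrix sum to zero, \<open>(q u)\<^sub>i\<close> only depends on the differences
  \<open>u\<^sub>j - u\<^sub>i\<close>, which are maximal on a box for \<open>vec_except i (b - a)\<close>.\<close>
lemma Q_matrix_mult_component_le: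
  assumes "Q_matrix q" "u \<in> {vec a..vec b}"
  shows "(q *v u) $ i \<le> (q *v vec_except i (b - a)) $ i"
proof -
  have row: "(q *v v) $ i = (\<Sum>j\<in>UNIV. q $ i $ j * (v $ j - v $ i))" for v
    using assms(1) by (simp add: Q_matrix_def matrix_vector_mult_def right_diff_distrib
        sum_subtractf flip: sum_distrib_right)
  have "q $ i $ j * (u $ j - u $ i) \<le> q $ i $ j * (b - a)" if "j \<noteq> i" for j
  proof (rule mult_left_mono)
    have "u $ j \<le> b" "a \<le> u $ i" using assms(2) by (auto simp: less_eq_vec_def)
    then show "u $ j - u $ i \<le> b - a" by linarith
  qed (use assms(1) that in \<open>simp add: Q_matrix_def\<close>)
  then show ?thesis
    unfolding row by (intro sum_mono) (auto simp: vec_except_def)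
qed

locale nisio_setting =
  fixes P :: "(real^'n^'n) set" and f :: "real^'n^'n \<Rightarrow> real^'n" and q0 :: "real^'n^'n"
  assumes Q_matrix: "\<And>q. q \<in> P \<Longrightarrow> Q_matrix q"
    and q0: "q0 \<in> P" "f q0 = 0"
    and f_nonpos: "\<And>q. q \<in> P \<Longrightarrow> f q \<le> 0"
    and generator_bdd: "\<And>u i. bdd_above ((\<lambda>q. (q *v u + f q) $ i) ` P)"
begin

abbreviation E :: "real \<Rightarrow> real^'n \<Rightarrow> real^'n" where
  "E \<equiv> Eh P f"

lemma Eh_component: "E h u $ i = (SUP q\<in>P. Sq q (f q) h u $ i)"
  by (simp add: Eh_def vsup_def image_image)

lemma Sq_le_Eh:
  assumes "q \<in> P" "0 \<le> h"
  shows "Sq q (f q) h u \<le> E h u"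
proof -
  have "Sq q (f q) h u $ i \<le> norm u" if "q \<in> P" for q i
    using Sq_le_vec[OF Q_matrix[OF that] f_nonpos[OF that] assms(2), of u "norm u"]
      mem_box_norm[of u]
    by (simp add: less_eq_vec_def)
  then have "bdd_above ((\<lambda>q. Sq q (f q) h u $ i) ` P)" for i
    by (intro bdd_aboveI2)
  then show ?thesis
    using assms(1) by (auto simp: less_eq_vec_def Eh_component intro: cSUP_upper)
qed

lemma Eh_le:
  assumes "\<And>q. q \<in> P \<Longrightarrow> Sq q (f q) h u \<le> v"
  shows "E h u \<le> v"
  using assms q0(1) by (auto simp: less_eq_vec_def Eh_component intro!: cSUP_least)

lemma Eh_zero [simp]: "E 0 u = u"
proof -
  have "P \<noteq> {}" using q0(1) by blast
  then show ?thesis by (simp add: vec_eq_iff Eh_component)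
qed

lemma Eh_mono: "0 \<le> h \<Longrightarrow> u \<le> v \<Longrightarrow> E h u \<le> E h v"
  by (intro Eh_le order.trans[OF Sq_mono Sq_le_Eh] Q_matrix)

lemma Eh_add_vec_le: "0 \<le> h \<Longrightarrow> E h (u + vec c) \<le> E h u + vec c"
  by (intro Eh_le) (simp add: Sq_add_vec Q_matrix Sq_le_Eh)

lemma Eh_add_vec:
  assumes "0 \<le> h"
  shows "E h (u + vec c) = E h u + vec c"
proof (rule antisym)
  show "E h (u + vec c) \<le> E h u + vec c" by (rule Eh_add_vec_le[OF assms])
  have "(u + vec c) + vec (- c) = u" by (simp add: vec_eq_iff)
  then have "E h u = E h ((u + vec c) + vec (- c))" by (simp only:)
  also have "\<dots> \<le> E h (u + vec c) + vec (- c)" by (rule Eh_add_vec_le[OF assms])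
  finally show "E h u + vec c \<le> E h (u + vec c)" by (simp add: less_eq_vec_def le_diff_eq)
qed

lemma Eh_add_le:
  assumes "0 \<le> a" "0 \<le> b"
  shows "E (a + b) u \<le> E a (E b u)"
proof (rule Eh_le)
  fix q assume q: "q \<in> P"
  have "Sq q (f q) (a + b) u = Sq q (f q) a (Sq q (f q) b u)" by (rule Sq_add[OF assms])
  also have "\<dots> \<le> Sq q (f q) a (E b u)"
    by (rule Sq_mono[OF Q_matrix[OF q] assms(1) Sq_le_Eh[OF q assms(2)]])
  also have "\<dots> \<le> E a (E b u)" by (rule Sq_le_Eh[OF q assms(1)])
  finally show "Sq q (f q) (a + b) u \<le> E a (E b u)" .
qed

lemma Eh_in_box:
  assumes "0 \<le> h" "u \<in> {vec a..vec b}"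
  shows "E h u \<in> {vec a..vec b}"
proof -
  note Q = Q_matrix[OF q0(1)]
  have "vec a \<le> mexp (h *\<^sub>R q0) *v u"
    using assms by (intro vec_le_mexp_mult[OF Q]) auto
  also have "\<dots> = Sq q0 (f q0) h u" by (simp add: Sq_def q0(2))
  also have "\<dots> \<le> E h u" by (rule Sq_le_Eh[OF q0(1) assms(1)])
  finally show ?thesis
    using assms by (auto intro: Eh_le Sq_le_vec Q_matrix f_nonpos)
qed

definition box_bound :: "real \<Rightarrow> real \<Rightarrow> real" where
  "box_bound a b = (\<Sum>i\<in>UNIV. \<bar>SUP q\<in>P. (q *v vec_except i (b - a) + f q) $ i\<bar>
    + \<bar>(q0 *v vec_except i (b - a)) $ i\<bar>)"

lemma box_bound_nonneg: "0 \<le> box_bound a b"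
  unfolding box_bound_def by (intro sum_nonneg) simp

lemma component_le_box_bound: "\<bar>SUP q\<in>P. (q *v vec_except i (b - a) + f q) $ i\<bar>
    + \<bar>(q0 *v vec_except i (b - a)) $ i\<bar> \<le> box_bound a b"
  unfolding box_bound_def
  by (rule member_le_sum[where f="\<lambda>i. \<bar>SUP q\<in>P. (q *v vec_except i (b - a) + f q) $ i\<bar>
    + \<bar>(q0 *v vec_except i (b - a)) $ i\<bar>"]) auto

lemma generator_le_box_bound:
  assumes "q \<in> P" "u \<in> {vec a..vec b}"
  shows "q *v u + f q \<le> vec (box_bound a b)"
proof -
  have "(q *v u + f q) $ i \<le> box_bound a b" for i
  proof -
    have "(q *v u + f q) $ i \<le> (q *v vec_except i (b - a) + f q) $ i"
      using Q_matrix_mult_component_le[OF Q_matrix[OF assms(1)] assms(2)] by simp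
    also have "\<dots> \<le> (SUP q\<in>P. (q *v vec_except i (b - a) + f q) $ i)"
      by (rule cSUP_upper[OF assms(1) generator_bdd])
    finally show ?thesis
      using component_le_box_bound[where i=i and a=a and b=b] by linarith
  qed
  then show ?thesis by (simp add: less_eq_vec_def)
qed

lemma box_bound_le_q0:
  assumes "u \<in> {vec a..vec b}"
  shows "vec (- box_bound a b) \<le> q0 *v u"
proof -
  have "- u \<in> {vec (- b)..vec (- a)}"
    using assms by (auto simp: less_eq_vec_def)
  moreover have "q0 *v (- u) = - (q0 *v u)"
    by (simp add: matrix_vector_mult_def vec_eq_iff sum_negf)
  ultimately have "- box_bound a b \<le> (q0 *v u) $ i" for i
    using Q_matrix_mult_component_le[OF Q_matrix[OF q0(1)], of "- u" "- b" "- a" i]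
      component_le_box_bound[where i=i and a=a and b=b]
    by simp
  then show ?thesis by (simp add: less_eq_vec_def)
qed

lemma Eh_le_add_vec: "0 \<le> h \<Longrightarrow> u \<in> {vec a..vec b} \<Longrightarrow> E h u \<le> u + vec (h * box_bound a b)"
  by (intro Eh_le Sq_le_add_vec Q_matrix generator_le_box_bound)

lemma Eh_ge_diff_vec:
  assumes "0 \<le> h" "u \<in> {vec a..vec b}"
  shows "u - vec (h * box_bound a b) \<le> E h u"
proof -
  have "u + vec (h * - box_bound a b) \<le> Sq q0 (f q0) h u"
    using box_bound_le_q0[OF assms(2)] q0(2)
    by (intro Sq_ge_diff_vec[OF Q_matrix[OF q0(1)] assms(1)]) simp
  also have "\<dots> \<le> E h u" by (rule Sq_le_Eh[OF q0(1) assms(1)])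
  finally show ?thesis by (simp add: less_eq_vec_def)
qed

lemma funpow_Eh_mono: "0 \<le> h \<Longrightarrow> u \<le> v \<Longrightarrow> (E h ^^ k) u \<le> (E h ^^ k) v"
  by (induction k) (simp_all add: Eh_mono)

lemma funpow_Eh_add_vec: "0 \<le> h \<Longrightarrow> (E h ^^ k) (u + vec c) = (E h ^^ k) u + vec c"
  by (induction k) (simp_all add: Eh_add_vec)

lemma funpow_Eh_in_box: "0 \<le> h \<Longrightarrow> u \<in> {vec a..vec b} \<Longrightarrow> (E h ^^ k) u \<in> {vec a..vec b}"
  by (induction k) (auto simp del: atLeastAtMost_iff intro!: Eh_in_box)

lemma funpow_Eh_ge_diff_vec:
  assumes "0 \<le> h" "u \<in> {vec a..vec b}"
  shows "u - vec (real k * h * box_bound a b) \<le> (E h ^^ k) u"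
proof (induction k)
  case (Suc k)
  have "u - vec (real (Suc k) * h * box_bound a b) =
      (u - vec (real k * h * box_bound a b)) - vec (h * box_bound a b)"
    by (simp add: vec_eq_iff algebra_simps)
  also have "\<dots> \<le> (E h ^^ k) u - vec (h * box_bound a b)"
    using Suc.IH by (simp add: less_eq_vec_def)
  also have "\<dots> \<le> E h ((E h ^^ k) u)"
    by (rule Eh_ge_diff_vec[OF assms(1) funpow_Eh_in_box[OF assms]])
  finally show ?case by simp
qed (simp add: less_eq_vec_def)

lemma Eh_le_funpow_add:
  assumes "0 \<le> \<delta>" "0 \<le> r"
  shows "E (real k * \<delta> + r) u \<le> (E \<delta> ^^ k) (E r u)"
proof (induction k arbitrary: u)
  case (Suc k)
  have "E (real (Suc k) * \<delta> + r) u = E (\<delta> + (real k * \<delta> + r)) u"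
    by (simp add: algebra_simps)
  also have "\<dots> \<le> E \<delta> (E (real k * \<delta> + r) u)"
    using assms by (intro Eh_add_le) auto
  also have "\<dots> \<le> E \<delta> ((E \<delta> ^^ k) (E r u))"
    by (rule Eh_mono[OF assms(1) Suc.IH])
  finally show ?case by simp
qed simp

lemma Eh_le_funpow_floor:
  assumes "0 < \<delta>" "0 \<le> h" "u \<in> {vec a..vec b}"
  shows "E h u \<le> (E \<delta> ^^ nat \<lfloor>h / \<delta>\<rfloor>) u + vec (\<delta> * box_bound a b)"
proof -
  define k where "k = nat \<lfloor>h / \<delta>\<rfloor>"
  define r where "r = h - real k * \<delta>"
  have "real k = real_of_int \<lfloor>h / \<delta>\<rfloor>"
    using assms by (simp add: k_def)
  then have "real k * \<delta> \<le> h" "h < real k * \<delta> + \<delta>"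
    using assms(1) floor_divide_lower[OF assms(1), of h] floor_divide_upper[OF assms(1), of h]
    by (simp_all add: algebra_simps)
  then have r: "0 \<le> r" "r \<le> \<delta>" by (simp_all add: r_def)
  have "E h u = E (real k * \<delta> + r) u" by (simp add: r_def)
  also have "\<dots> \<le> (E \<delta> ^^ k) (E r u)"
    using assms(1) r by (intro Eh_le_funpow_add) auto
  also have "\<dots> \<le> (E \<delta> ^^ k) (u + vec (\<delta> * box_bound a b))"
  proof (intro funpow_Eh_mono order.trans[OF Eh_le_add_vec[OF r(1) assms(3)]])
    show "u + vec (r * box_bound a b) \<le> u + vec (\<delta> * box_bound a b)"
      using mult_right_mono[OF r(2) box_bound_nonneg] by (simp add: less_eq_vec_def)
  qed (use assms(1) in simp)
  also have "\<dots> = (E \<delta> ^^ k) u + vec (\<delta> * box_bound a b)"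
    using assms(1) by (simp add: funpow_Eh_add_vec)
  finally show ?thesis by (simp add: k_def)
qed

lemma foldr_Eh_le_funpow:
  assumes "0 < \<delta>" "u \<in> {vec a..vec b}"
  shows "\<forall>h\<in>set hs. 0 \<le> h \<Longrightarrow>
    foldr E hs u \<le> (E \<delta> ^^ (\<Sum>h\<leftarrow>hs. nat \<lfloor>h / \<delta>\<rfloor>)) u + vec (real (length hs) * \<delta> * box_bound a b)"
proof (induction hs)
  case (Cons h hs)
  let ?K = "\<Sum>h\<leftarrow>hs. nat \<lfloor>h / \<delta>\<rfloor>" and ?c = "real (length hs) * \<delta> * box_bound a b"
  have h: "0 \<le> h" and IH: "foldr E hs u \<le> (E \<delta> ^^ ?K) u + vec ?c"
    using Cons by auto
  have box: "(E \<delta> ^^ ?K) u \<in> {vec a..vec b}"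
    using assms by (intro funpow_Eh_in_box) auto
  have "foldr E (h # hs) u \<le> E h ((E \<delta> ^^ ?K) u + vec ?c)"
    using Eh_mono[OF h IH] by simp
  also have "\<dots> = E h ((E \<delta> ^^ ?K) u) + vec ?c"
    by (rule Eh_add_vec[OF h])
  also have "\<dots> \<le> (E \<delta> ^^ nat \<lfloor>h / \<delta>\<rfloor>) ((E \<delta> ^^ ?K) u) + vec (\<delta> * box_bound a b) + vec ?c"
    using Eh_le_funpow_floor[OF assms(1) h box] by (rule add_right_mono)
  finally show ?case
    by (simp add: funpow_add algebra_simps vec_add)
qed (simp add: less_eq_vec_def)

lemma funpow_Eh_le_funpow:
  assumes "0 \<le> \<delta>" "K \<le> n" "u \<in> {vec a..vec b}"
  shows "(E \<delta> ^^ K) u \<le> (E \<delta> ^^ n) u + vec (real (n - K) * \<delta> * box_bound a b)"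
proof -
  let ?c = "real (n - K) * \<delta> * box_bound a b"
  have "(E \<delta> ^^ K) u - vec ?c = (E \<delta> ^^ K) (u - vec ?c)"
    using funpow_Eh_add_vec[OF assms(1), of K u "- ?c"] by (simp add: vec_neg)
  also have "\<dots> \<le> (E \<delta> ^^ K) ((E \<delta> ^^ (n - K)) u)"
    by (intro funpow_Eh_mono funpow_Eh_ge_diff_vec assms)
  also have "\<dots> = (E \<delta> ^^ n) u"
    using assms(2) by (metis funpow_add o_apply le_add_diff_inverse)
  finally show ?thesis by (simp add: less_eq_vec_def diff_le_eq)
qed

lemma foldr_Eh_le_uniform:
  assumes "0 < t" "1 \<le> n" "\<forall>h\<in>set hs. 0 \<le> h" "sum_list hs = t" "u \<in> {vec a..vec b}"
  shows "foldr E hs u \<le>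
    (E (t / real n) ^^ n) u + vec (2 * real (length hs) * t * box_bound a b / real n)"
proof -
  define \<delta> where "\<delta> = t / real n"
  define K where "K = (\<Sum>h\<leftarrow>hs. nat \<lfloor>h / \<delta>\<rfloor>)"
  have \<delta>: "0 < \<delta>" "real n * \<delta> = t"
    using assms(1,2) by (simp_all add: \<delta>_def)
  have "real K * \<delta> \<le> real n * \<delta>" "real n * \<delta> \<le> (real K + real (length hs)) * \<delta>"
    using sum_list_floor_bounds[OF \<delta>(1) assms(3)] assms(4) \<delta>(2) by (simp_all add: K_def)
  then have "K \<le> n" "real (n - K) \<le> real (length hs)"
    using \<delta>(1) by (simp_all add: mult_le_cancel_right of_nat_diff)
  have "foldr E hs u \<le> (E \<delta> ^^ K) u + vec (real (length hs) * \<delta> * box_bound a b)"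
    unfolding K_def by (rule foldr_Eh_le_funpow[OF \<delta>(1) assms(5,3)])
  also have "\<dots> \<le> (E \<delta> ^^ n) u + vec (real (n - K) * \<delta> * box_bound a b)
      + vec (real (length hs) * \<delta> * box_bound a b)"
    using \<delta>(1) by (intro add_right_mono funpow_Eh_le_funpow \<open>K \<le> n\<close> assms(5)) simp
  also have "\<dots> \<le> (E \<delta> ^^ n) u + vec (2 * real (length hs) * \<delta> * box_bound a b)"
    using mult_right_mono[OF \<open>real (n - K) \<le> real (length hs)\<close>, of "\<delta> * box_bound a b"]
      \<delta>(1) box_bound_nonneg by (simp add: less_eq_vec_def algebra_simps)
  finally show ?thesis by (simp add: \<delta>_def)
qed

lemma funpow_Eh_zero [simp]: "(E 0 ^^ n) u = u"
  by (induction n) simp_all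

lemma foldr_Eh_in_box:
  "\<forall>h\<in>set hs. 0 \<le> h \<Longrightarrow> u \<in> {vec a..vec b} \<Longrightarrow> foldr E hs u \<in> {vec a..vec b}"
  by (induction hs) (auto simp del: atLeastAtMost_iff intro!: Eh_in_box)

lemma Epi_le_norm:
  assumes "\<pi> \<in> partitions_upto t"
  shows "Epi P f \<pi> u \<le> vec (norm u)"
  using foldr_Eh_in_box[OF partition_steps_nonneg_sum(1)[OF assms] mem_box_norm]
  by (simp add: Epi_eq_foldr)

lemma funpow_Eh_eq_Epi_uniform:
  assumes "1 \<le> n" "0 \<le> t"
  shows "(E (t / real n) ^^ n) u = Epi P f (uniform_partition n t) u"
proof (cases "t = 0")
  case True
  then have "uniform_partition n t = {0}"
    using assms(1) by (auto simp: uniform_partition_def)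
  with True show ?thesis
    by (simp add: Epi_eq_foldr)
next
  case False
  with assms show ?thesis
    by (simp add: Epi_eq_foldr partition_steps_uniform foldr_replicate)
qed

lemma Epi_le_uniform:
  assumes "\<pi> \<in> partitions_upto t"
  shows "\<exists>C. \<forall>n\<ge>1. Epi P f \<pi> u \<le> (E (t / real n) ^^ n) u + vec (C / real n)"
proof (cases "t = 0")
  case True
  then show ?thesis
    using assms by (auto simp: partitions_upto_zero Epi_eq_foldr intro!: exI[of _ 0])
next
  case False
  moreover have "0 \<le> t"
    using assms Max_ge[of \<pi> 0] by (auto simp: partitions_upto_def)
  ultimately have "0 < t" by simp
  then show ?thesis
    using foldr_Eh_le_uniform[OF \<open>0 < t\<close> _ partition_steps_nonneg_sum[OF assms] mem_box_norm]
    by (auto simp: Epi_eq_foldr)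
qed

lemma Nisio_eq_lim_uniform:
  assumes "0 \<le> t"
  shows "(\<lambda>n. (E (t / real n) ^^ n) u) \<longlonglongrightarrow> Nisio P f t u"
    and "Nisio P f t u = vsup ((\<lambda>n. (E (t / real n) ^^ n) u) ` {1..})"
proof -
  let ?S = "(\<lambda>\<pi>. Epi P f \<pi> u) ` partitions_upto t"
  have bounded: "x \<le> vec (norm u)" if "x \<in> ?S" for x
    using that Epi_le_norm by auto
  have uniform: "(E (t / real n) ^^ n) u \<in> ?S" if "1 \<le> n" for n
    using that assms by (simp add: funpow_Eh_eq_Epi_uniform uniform_partition_in_partitions_upto)
  have approx: "\<exists>C. \<forall>n\<ge>1. x \<le> (E (t / real n) ^^ n) u + vec (C / real n)" if "x \<in> ?S" for x
    using that Epi_le_uniform by auto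
  show "(\<lambda>n. (E (t / real n) ^^ n) u) \<longlonglongrightarrow> Nisio P f t u"
    and "Nisio P f t u = vsup ((\<lambda>n. (E (t / real n) ^^ n) u) ` {1..})"
    unfolding Nisio_def using vsup_approximated[OF bounded uniform approx] by simp_all
qed

end

theorem mainTheorem7:
  fixes P :: "(real^'n^'n) set" and f :: "real^'n^'n \<Rightarrow> real^'n"
    and q0 :: "real^'n^'n" and t :: real and u0 :: "real^'n"
  assumes QP: "\<And>q. q \<in> P \<Longrightarrow> Q_matrix q"
    and q0: "q0 \<in> P" "f q0 = 0"
    and fsup: "\<And>i. (SUP q\<in>P. f q $ i) = 0" "\<And>i. bdd_above ((\<lambda>q. f q $ i) ` P)"
    and Qfin: "\<And>u i. bdd_above ((\<lambda>q. (q *v u + f q) $ i) ` P)"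
    and t: "t \<ge> 0"
  shows "Nisio P f t u0 = vsup ((\<lambda>n. (Eh P f (t / real n) ^^ n) u0) ` {1..}) \<and>
         (\<lambda>n. (Eh P f (t / 2 ^ n) ^^ (2 ^ n)) u0) \<longlonglongrightarrow> Nisio P f t u0"
proof -
  have "f q \<le> 0" if "q \<in> P" for q
    using cSUP_upper[OF that fsup(2)] fsup(1) by (simp add: less_eq_vec_def)
  then interpret nisio_setting P f q0
    using QP q0 Qfin by unfold_locales auto
  have "strict_mono (\<lambda>k. 2 ^ k :: nat)"
    by (simp add: strict_mono_def)
  from LIMSEQ_subseq_LIMSEQ[OF Nisio_eq_lim_uniform(1)[OF t] this]
  show ?thesis
    using Nisio_eq_lim_uniform(2)[OF t] by (simp add: o_def)
qed

end
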